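(* In the hierarchical partition construction described in the context, for every level $j$ and every $S\in\mathcal S_j$, the number of sets $S'\in\mathcal S_j$ (including $S$ itself) that $S$ knows is at most $\lambda^{3+\eta}$. Equivalently, $\bigcup\{B_{r_j}(v):v\in S\}$ intersects at most $\lambda^{3+\eta}$ sets of $\mathcal S_j$.
   Context: Let $(V,d)$ be a finite metric space with $|V|\ge 2$ which is doubling with constant $\lambda$: for every $v\in V$ and $r>0$ the open ball $B_{2r}(v)=\{u:d(u,v)<2r\}$ is contained in the union of at most $\lambda$ open balls $B_r(w)$, $w\in V$. Fix an integer $\eta\ge2$ and a real $\tau$ with $1+\frac{1}{2^{\eta-1}-1}\le\tau\le 2^{\eta}$. For $L\subseteq V$ and $r>0$, a greedy partition of $L$ with parameter $r$ is obtained by: set $L_0=L$; while $L_i\ne\emptyset$ choose any $v_i\in L_i$, let $P_i=\{u\in L_i: d(u,v_i)<2^{-\eta-1}r\}$ with leader $v_i$, and set $L_{i+1}=L_i\setminus P_i$. Hierarchical partition construction: choose $r_0$ with $0<r_0<\min_{u\ne v}d(u,v)$ and put $r_j=\tau^j r_0$. Let $\mathcal S_0=\{\{v\}:v\in V\}$, the leader of $\{v\}$ being $v$. While $\mathcal S_j$ has more than one element: let $L_j$ be the set of leaders of the sets in $\mathcal S_j$, let $\mathcal S'_{j+1}$ be a greedy partition of $L_j$ with parameter $2r_{j+1}$, and let $\mathcal S_{j+1}$ consist, for each $P\in\mathcal S'_{j+1}$, of the set $\bigcup\{S\in\mathcal S_j:\mathrm{leader}(S)\in P\}$, whose leader is defined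 to be the leader of $P$. Each $\mathcal S_j$ is a partition of $V$. For $S,S'\in\mathcal S_j$, $S$ knows $S'$ (at level $j$) if there are $v\in S$, $u\in S'$ with $d(v,u)<r_j$; $B_r(v)$ denotes the open ball $\{u\in V:d(u,v)<r\}$. *)

theory Defs
  imports Complex_Main
begin

definition metric_on :: "'a set \<Rightarrow> ('a \<Rightarrow> 'a \<Rightarrow> real) \<Rightarrow> bool" where
  "metric_on V d \<longleftrightarrow>
     (\<forall>u\<in>V. \<forall>v\<in>V. d u v = 0 \<longleftrightarrow> u = v) \<and>
     (\<forall>u\<in>V. \<forall>v\<in>V. d u v = d v u) \<and>
     (\<forall>u\<in>V. \<forall>v\<in>V. \<forall>w\<in>V. d u w \<le> d u v + d v w)"

definition oball :: "'a set \<Rightarrow> ('a \<Rightarrow> 'a \<Rightarrow> real) \<Rightarrow> 'a \<Rightarrow> real \<Rightarrow> 'a set" where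
  "oball V d v r = {u \<in> V. d u v < r}"

definition doubling :: "'a set \<Rightarrow> ('a \<Rightarrow> 'a \<Rightarrow> real) \<Rightarrow> nat \<Rightarrow> bool" where
  "doubling V d lam \<longleftrightarrow>
     (\<forall>v\<in>V. \<forall>r>0. \<exists>W. W \<subseteq> V \<and> card W \<le> lam \<and>
        oball V d v (2 * r) \<subseteq> (\<Union>w\<in>W. oball V d w r))"

text \<open>Greedy partition of L with parameter r (and fixed eta): the result is a set of pairs
  (leader, part). Each run of the nondeterministic greedy procedure yields such a set.\<close>
inductive greedy_part :: "('a \<Rightarrow> 'a \<Rightarrow> real) \<Rightarrow> nat \<Rightarrow> real \<Rightarrow> 'a set \<Rightarrow> ('a \<times> 'a set) set \<Rightarrow> bool"
  for d :: "'a \<Rightarrow> 'a \<Rightarrow> real" and eta :: nat and r :: real where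
  empty: "greedy_part d eta r {} {}"
| step: "\<lbrakk> v \<in> L; P = {u \<in> L. d u v < r / 2 ^ (eta + 1)};
           greedy_part d eta r (L - P) R \<rbrakk>
         \<Longrightarrow> greedy_part d eta r L (insert (v, P) R)"

definition hier_step :: "('a \<Rightarrow> 'a \<Rightarrow> real) \<Rightarrow> nat \<Rightarrow> real \<Rightarrow>
     ('a \<times> 'a set) set \<Rightarrow> ('a \<times> 'a set) set \<Rightarrow> bool" where
  "hier_step d eta rnext Sj Sj' \<longleftrightarrow>
     (\<exists>P'. greedy_part d eta (2 * rnext) (fst ` Sj) P' \<and>
        Sj' = (\<lambda>(l, P). (l, \<Union>{S. \<exists>l'. (l', S) \<in> Sj \<and> l' \<in> P})) ` P')"

text \<open>S 0, ..., S N are the first N+1 levels of a run of the hierarchical partition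
  construction with r_j = tau^j * r0 (the loop body executed while there is more than one set).\<close>
definition hier_run :: "'a set \<Rightarrow> ('a \<Rightarrow> 'a \<Rightarrow> real) \<Rightarrow> nat \<Rightarrow> real \<Rightarrow> real \<Rightarrow>
     (nat \<Rightarrow> ('a \<times> 'a set) set) \<Rightarrow> nat \<Rightarrow> bool" where
  "hier_run V d eta tau r0 S N \<longleftrightarrow>
     0 < r0 \<and> (\<forall>u\<in>V. \<forall>v\<in>V. u \<noteq> v \<longrightarrow> r0 < d u v) \<and>
     S 0 = (\<lambda>v. (v, {v})) ` V \<and>
     (\<forall>j<N. card (S j) > 1 \<and> hier_step d eta (tau ^ (Suc j) * r0) (S j) (S (Suc j)))"

definition knows :: "('a \<Rightarrow> 'a \<Rightarrow> real) \<Rightarrow> real \<Rightarrow> 'a set \<Rightarrow> 'a set \<Rightarrow> bool" where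
  "knows d rj S S' \<longleftrightarrow> (\<exists>v\<in>S. \<exists>u\<in>S'. d v u < rj)"

end

theory Submission
  imports Defs
begin

text \<open>
  Call a level R (a set of pairs (leader, part)) well-formed with radius rad
  and separation sep if every point of a part lies within rad of its leader and distinct
  pairs have leaders at distance at least sep.  Level 0 is well-formed with radius r0/2 and
  separation r0/2^eta; one step of the construction with parameter 2 r_{j+1} turns radius rad
  into rad + r_{j+1}/2^eta and gives separation r_{j+1}/2^eta (greedy partitions).  The
  hypothesis on tau makes the radius recurrence close up, so level j is well-formed with
  radius r_j/2 and separation r_j/2^eta.  If T knows T' at level j, the leader of T' lies
  within 2 r_j of the leader of T; these leaders are r_j/2^eta-separated, and a packing
  bound derived from the doubling property (iterated eta+2 times) shows there are at most
  lam^(eta+2) \<le> lam^(3+eta) of them.  Since leaders determine pairs, this bounds the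
  number of known parts.
\<close>

lemma metric_onD:
  assumes "metric_on V d"
  shows metric_refl: "\<And>u. u \<in> V \<Longrightarrow> d u u = 0"
    and metric_sym: "\<And>u v. u \<in> V \<Longrightarrow> v \<in> V \<Longrightarrow> d u v = d v u"
    and metric_triangle: "\<And>u v w. u \<in> V \<Longrightarrow> v \<in> V \<Longrightarrow> w \<in> V \<Longrightarrow> d u w \<le> d u v + d v w"
  using assms unfolding metric_on_def by blast+

lemma doubling_cover:
  assumes fin: "finite V" and dbl: "doubling V d lam"
    and "c \<in> V" and "t > 0"
  shows "\<exists>W. W \<subseteq> V \<and> card W \<le> lam ^ k \<and> oball V d c (2 ^ k * t) \<subseteq> (\<Union>w\<in>W. oball V d w t)"
  using \<open>c \<in> V\<close>
proof (induction k arbitrary: c)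
  case 0
  then show ?case by (intro exI[of _ "{c}"]) auto
next
  case (Suc k)
  have "2 ^ k * t > 0" using \<open>t > 0\<close> by simp
  obtain W1 where W1: "W1 \<subseteq> V" "card W1 \<le> lam"
      "oball V d c (2 * (2 ^ k * t)) \<subseteq> (\<Union>w\<in>W1. oball V d w (2 ^ k * t))"
    using dbl[unfolded doubling_def, rule_format, OF Suc.prems \<open>2 ^ k * t > 0\<close>] by blast
  have "\<forall>w\<in>W1. \<exists>W. W \<subseteq> V \<and> card W \<le> lam ^ k \<and> oball V d w (2 ^ k * t) \<subseteq> (\<Union>w'\<in>W. oball V d w' t)"
    using Suc.IH W1(1) by auto
  then obtain g where g: "\<And>w. w \<in> W1 \<Longrightarrow> g w \<subseteq> V \<and> card (g w) \<le> lam ^ k \<and>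
      oball V d w (2 ^ k * t) \<subseteq> (\<Union>w'\<in>g w. oball V d w' t)"
    by (rule bchoice[THEN exE]) blast
  have "finite W1" using W1(1) fin finite_subset by blast
  then have "card (\<Union>w\<in>W1. g w) \<le> (\<Sum>w\<in>W1. card (g w))" by (rule card_UN_le)
  also have "\<dots> \<le> card W1 * lam ^ k" using sum_bounded_above[of W1 "\<lambda>w. card (g w)"] g by simp
  also have "\<dots> \<le> lam ^ Suc k" using W1(2) by (simp add: mult_right_mono)
  finally have "card (\<Union>w\<in>W1. g w) \<le> lam ^ Suc k" .
  moreover have "oball V d c (2 ^ Suc k * t) \<subseteq> (\<Union>w\<in>(\<Union>w\<in>W1. g w). oball V d w t)"
    using W1(3) g by (fastforce simp: mult.assoc)
  moreover have "(\<Union>w\<in>W1. g w) \<subseteq> V" using g by blast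
  ultimately show ?case by blast
qed

text \<open>Packing bound: a 2t-separated subset of a ball of radius 2^k t has at most lam^k
  elements, since each of the covering balls of radius t contains at most one of them.\<close>
lemma doubling_packing:
  assumes fin: "finite V" and met: "metric_on V d" and dbl: "doubling V d lam"
    and "c \<in> V" and "t > 0" and A: "A \<subseteq> oball V d c (2 ^ k * t)"
    and sep: "\<And>a b. a \<in> A \<Longrightarrow> b \<in> A \<Longrightarrow> a \<noteq> b \<Longrightarrow> 2 * t \<le> d a b"
  shows "card A \<le> lam ^ k"
proof -
  obtain W where W: "W \<subseteq> V" "card W \<le> lam ^ k" "oball V d c (2 ^ k * t) \<subseteq> (\<Union>w\<in>W. oball V d w t)"
    using doubling_cover[OF fin dbl \<open>c \<in> V\<close> \<open>t > 0\<close>, of k] by auto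
  have "\<forall>a\<in>A. \<exists>w. w \<in> W \<and> a \<in> oball V d w t" using A W(3) by blast
  then obtain f where f: "\<And>a. a \<in> A \<Longrightarrow> f a \<in> W \<and> a \<in> oball V d (f a) t"
    by (rule bchoice[THEN exE]) blast
  have "inj_on f A"
  proof (rule inj_onI, rule ccontr)
    fix a b assume ab: "a \<in> A" "b \<in> A" "f a = f b" "a \<noteq> b"
    have in_V: "a \<in> V" "b \<in> V" "f a \<in> V" and close: "d a (f a) < t" "d b (f a) < t"
      using f[OF ab(1)] f[OF ab(2)] ab(3) W(1) unfolding oball_def by auto
    have "d a b \<le> d a (f a) + d b (f a)"
      using metric_triangle[OF met in_V(1,3,2)] metric_sym[OF met in_V(3,2)] by simp
    then show False using sep[OF ab(1,2,4)] close by linarith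
  qed
  moreover have "f ` A \<subseteq> W" using f by auto
  moreover have "finite W" using W(1) fin finite_subset by blast
  ultimately have "card A \<le> card W" by (rule card_inj_on_le)
  then show ?thesis using W(2) by linarith
qed

text \<open>A greedy partition of L with parameter r uses leaders from L, keeps every point
  within r/2^(eta+1) of its leader, and its leaders are r/2^(eta+1)-separated (in the
  direction in which the later leader was not absorbed by the earlier part).\<close>
lemma greedy_part_props:
  assumes "greedy_part d eta r L R"
  shows "fst ` R \<subseteq> L"
    and "\<And>l P u. (l, P) \<in> R \<Longrightarrow> u \<in> P \<Longrightarrow> d u l < r / 2 ^ (eta + 1)"
    and "\<And>p q. p \<in> R \<Longrightarrow> q \<in> R \<Longrightarrow> p \<noteq> q \<Longrightarrow>
           r / 2 ^ (eta + 1) \<le> d (fst p) (fst q) \<or> r / 2 ^ (eta + 1) \<le> d (fst q) (fst p)"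
proof -
  have "fst ` R \<subseteq> L \<and> (\<forall>(l, P)\<in>R. \<forall>u\<in>P. d u l < r / 2 ^ (eta + 1)) \<and>
    (\<forall>p\<in>R. \<forall>q\<in>R. p \<noteq> q \<longrightarrow>
       r / 2 ^ (eta + 1) \<le> d (fst p) (fst q) \<or> r / 2 ^ (eta + 1) \<le> d (fst q) (fst p))"
    using assms
  proof induction
    case empty
    then show ?case by simp
  next
    case (step v L P R)
    then have leaders: "fst ` R \<subseteq> L - P" by blast
    \<comment> \<open>every earlier leader lies outside the ball absorbed by the new leader v\<close>
    then have "\<forall>q\<in>R. r / 2 ^ (eta + 1) \<le> d (fst q) v"
      using step.hyps(2) by (auto simp: not_less)
    then show ?case using step leaders by auto
  qed
  then show "fst ` R \<subseteq> L"
    and "\<And>l P u. (l, P) \<in> R \<Longrightarrow> u \<in> P \<Longrightarrow> d u l < r / 2 ^ (eta + 1)"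
    and "\<And>p q. p \<in> R \<Longrightarrow> q \<in> R \<Longrightarrow> p \<noteq> q \<Longrightarrow>
           r / 2 ^ (eta + 1) \<le> d (fst p) (fst q) \<or> r / 2 ^ (eta + 1) \<le> d (fst q) (fst p)"
    by fast+
qed

definition level_inv :: "'a set \<Rightarrow> ('a \<Rightarrow> 'a \<Rightarrow> real) \<Rightarrow> real \<Rightarrow> real \<Rightarrow> ('a \<times> 'a set) set \<Rightarrow> bool"
  where "level_inv V d rad sep R \<longleftrightarrow>
    (\<forall>(l, P)\<in>R. l \<in> V \<and> P \<subseteq> V \<and> (\<forall>x\<in>P. d x l \<le> rad)) \<and>
    (\<forall>p\<in>R. \<forall>q\<in>R. p \<noteq> q \<longrightarrow> sep \<le> d (fst p) (fst q))"

lemma level_invD: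
  assumes "level_inv V d rad sep R"
  shows "\<And>l P. (l, P) \<in> R \<Longrightarrow> l \<in> V"
    and "\<And>l P. (l, P) \<in> R \<Longrightarrow> P \<subseteq> V"
    and "\<And>l P x. (l, P) \<in> R \<Longrightarrow> x \<in> P \<Longrightarrow> d x l \<le> rad"
    and "\<And>p q. p \<in> R \<Longrightarrow> q \<in> R \<Longrightarrow> p \<noteq> q \<Longrightarrow> sep \<le> d (fst p) (fst q)"
  using assms unfolding level_inv_def by blast+

lemma level_inv_mono:
  "level_inv V d rad sep R \<Longrightarrow> rad \<le> rad' \<Longrightarrow> level_inv V d rad' sep R"
  unfolding level_inv_def by fastforce

text \<open>The initial level of singletons: radius r0/2 (any nonnegative value would do) and
  separation r0/2^eta, since distinct points are more than r0 apart.\<close>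
lemma level_inv_singletons:
  assumes met: "metric_on V d" and "0 < r0" and sep0: "\<forall>u\<in>V. \<forall>v\<in>V. u \<noteq> v \<longrightarrow> r0 < d u v"
  shows "level_inv V d (r0 / 2) (r0 / 2 ^ eta) ((\<lambda>v. (v, {v})) ` V)"
proof -
  have "r0 / 2 ^ eta \<le> r0" using \<open>0 < r0\<close> by (simp add: divide_le_eq)
  then show ?thesis
    unfolding level_inv_def using sep0 \<open>0 < r0\<close> metric_refl[OF met] by fastforce
qed

lemma level_inv_hier_step:
  assumes met: "metric_on V d" and inv: "level_inv V d rad sep Sj"
    and step: "hier_step d eta rnext Sj Sj'"
  shows "level_inv V d (rad + rnext / 2 ^ eta) (rnext / 2 ^ eta) Sj'"
proof -
  define merge where "merge P = \<Union>{S. \<exists>l'. (l', S) \<in> Sj \<and> l' \<in> P}" for P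
  obtain P' where gp: "greedy_part d eta (2 * rnext) (fst ` Sj) P'"
    and Sj': "Sj' = (\<lambda>(l, P). (l, merge P)) ` P'"
    using step unfolding hier_step_def merge_def by blast
  have c: "2 * rnext / 2 ^ (eta + 1) = rnext / 2 ^ eta" by simp
  note leaders = greedy_part_props(1)[OF gp]
    and near = greedy_part_props(2)[OF gp, unfolded c]
    and apart = greedy_part_props(3)[OF gp, unfolded c]
  have leader_V: "fst p \<in> V" if "p \<in> P'" for p
    using that leaders level_invD(1)[OF inv] by fastforce
  have parts: "l \<in> V \<and> merge P \<subseteq> V \<and> (\<forall>x\<in>merge P. d x l \<le> rad + rnext / 2 ^ eta)"
    if lP: "(l, P) \<in> P'" for l P
  proof -
    have lV: "l \<in> V" using leader_V[OF lP] by simp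
    have "d x l \<le> rad + rnext / 2 ^ eta" if "x \<in> merge P" for x
    proof -
      obtain l' S where lS: "(l', S) \<in> Sj" "l' \<in> P" "x \<in> S"
        using \<open>x \<in> merge P\<close> unfolding merge_def by blast
      have in_V: "x \<in> V" "l' \<in> V" using level_invD(1,2)[OF inv lS(1)] lS(3) by auto
      have "d x l \<le> d x l' + d l' l" using metric_triangle[OF met in_V lV] .
      then show ?thesis using level_invD(3)[OF inv lS(1,3)] near[OF lP lS(2)] by linarith
    qed
    moreover have "merge P \<subseteq> V" unfolding merge_def using level_invD(2)[OF inv] by blast
    ultimately show ?thesis using lV by blast
  qed
  have separated: "rnext / 2 ^ eta \<le> d (fst p) (fst q)" if "p \<in> P'" "q \<in> P'" "p \<noteq> q" for p q
    using apart[OF that] metric_sym[OF met leader_V[OF that(1)] leader_V[OF that(2)]] by linarith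
  have "\<forall>(l, U)\<in>Sj'. l \<in> V \<and> U \<subseteq> V \<and> (\<forall>x\<in>U. d x l \<le> rad + rnext / 2 ^ eta)"
    unfolding Sj' using parts by auto
  moreover have "rnext / 2 ^ eta \<le> d (fst p) (fst q)" if pq: "p \<in> Sj'" "q \<in> Sj'" "p \<noteq> q" for p q
  proof -
    obtain p0 q0 where "p0 \<in> P'" "q0 \<in> P'" "p = (fst p0, merge (snd p0))" "q = (fst q0, merge (snd q0))"
      using pq(1,2) unfolding Sj' by (auto split: prod.splits)
    then show ?thesis using separated \<open>p \<noteq> q\<close> by fastforce
  qed
  ultimately show ?thesis unfolding level_inv_def by blast
qed

text \<open>The lower bound on tau forces tau \<ge> 1, so all radii r_j are positive.\<close>
lemma tau_ge_one:
  fixes tau :: real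
  assumes "eta \<ge> 2" and "1 + 1 / (2 ^ (eta - 1) - 1) \<le> tau"
  shows "1 \<le> tau"
proof -
  have "(2::real) ^ 1 \<le> 2 ^ (eta - 1)" using assms(1) by (intro power_increasing) auto
  then have "0 \<le> 1 / (2 ^ (eta - 1) - 1 :: real)" by simp
  then show ?thesis using assms(2) by linarith
qed

text \<open>The radius recurrence closes up: with a = r_j, a part of radius r_j/2 merged at
  distance r_{j+1}/2^eta from a new leader has radius at most r_{j+1}/2.  This is exactly
  where the lower bound on tau is used.\<close>
lemma radius_recurrence:
  fixes tau a :: real
  assumes "eta \<ge> 2" and "1 + 1 / (2 ^ (eta - 1) - 1) \<le> tau" and "a \<ge> 0"
  shows "a / 2 + tau * a / 2 ^ eta \<le> tau * a / 2"
proof -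
  define K :: real where "K = 2 ^ (eta - 1)"
  have K2: "K \<ge> 2" unfolding K_def using power_increasing[of 1 "eta - 1" "2::real"] assms(1) by simp
  have eK: "(2::real) ^ eta = 2 * K"
    unfolding K_def using assms(1) by (metis Suc_diff_1 less_le_trans pos2 power_Suc)
  have "K = (1 + 1 / (K - 1)) * (K - 1)" using K2 by (simp add: field_simps)
  also have "\<dots> \<le> tau * (K - 1)" using assms(2) K2 unfolding K_def by (intro mult_right_mono) auto
  finally have "K + tau - tau * K \<le> 0" by (simp add: algebra_simps)
  then have "a * (K + tau - tau * K) \<le> 0" using assms(3) by (simp add: mult_nonneg_nonpos)
  then show ?thesis unfolding eK using K2 by (simp add: field_simps)
qed

lemma hier_run_level_inv:
  assumes met: "metric_on V d" and "eta \<ge> 2" and tau: "1 + 1 / (2 ^ (eta - 1) - 1) \<le> tau"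
    and run: "hier_run V d eta tau r0 S N" and "j \<le> N"
  shows "level_inv V d (tau ^ j * r0 / 2) (tau ^ j * r0 / 2 ^ eta) (S j)"
  using \<open>j \<le> N\<close>
proof (induction j)
  case 0
  then show ?case using run level_inv_singletons[OF met] unfolding hier_run_def by simp
next
  case (Suc i)
  have "hier_step d eta (tau ^ Suc i * r0) (S i) (S (Suc i))"
    using run Suc.prems unfolding hier_run_def by simp
  then have "level_inv V d (tau ^ i * r0 / 2 + tau ^ Suc i * r0 / 2 ^ eta) (tau ^ Suc i * r0 / 2 ^ eta) (S (Suc i))"
    using level_inv_hier_step[OF met] Suc by simp
  moreover have "tau ^ i * r0 / 2 + tau ^ Suc i * r0 / 2 ^ eta \<le> tau ^ Suc i * r0 / 2"
    using radius_recurrence[OF \<open>eta \<ge> 2\<close> tau, of "tau ^ i * r0"] tau_ge_one[OF \<open>eta \<ge> 2\<close> tau] run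
    unfolding hier_run_def by (simp add: mult.assoc)
  ultimately show ?case by (rule level_inv_mono)
qed

text \<open>In a well-formed level with radius r/2 and separation r/2^eta, a part knows at most
  lam^(eta+2) parts: their leaders lie in the ball of radius 2r = 2^(eta+2) (r/2^(eta+1))
  around its leader and are 2 (r/2^(eta+1))-separated.\<close>
lemma known_parts_card:
  assumes fin: "finite V" and met: "metric_on V d" and dbl: "doubling V d lam"
    and "r > 0" and inv: "level_inv V d (r / 2) (r / 2 ^ eta) R" and lT: "(l, T) \<in> R"
  shows "card {T'. (\<exists>l'. (l', T') \<in> R) \<and> knows d r T T'} \<le> lam ^ (eta + 2)"
proof -
  define K where "K = {p \<in> R. knows d r T (snd p)}"
  define t where "t = r / 2 ^ (eta + 1)"
  have "t > 0" using \<open>r > 0\<close> unfolding t_def by simp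
  have lV: "l \<in> V" using level_invD(1)[OF inv lT] .
  \<comment> \<open>leaders determine the pairs of a level, since distinct pairs have leaders at positive distance\<close>
  have inj: "inj_on fst R"
  proof (rule inj_onI, rule ccontr)
    fix p q assume pq: "p \<in> R" "q \<in> R" "fst p = fst q" "p \<noteq> q"
    have "fst p \<in> V" using level_invD(1)[OF inv] pq(1) by (metis prod.collapse)
    then have "d (fst p) (fst q) = 0" using pq(3) metric_refl[OF met] by simp
    moreover have "r / 2 ^ eta \<le> d (fst p) (fst q)" using level_invD(4)[OF inv pq(1,2,4)] .
    moreover have "0 < r / 2 ^ eta" using \<open>r > 0\<close> by simp
    ultimately show False by linarith
  qed
  have "finite R" using finite_imageD[OF finite_subset[OF _ fin] inj] level_invD(1)[OF inv] by force
  then have finK: "finite K" unfolding K_def by simp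
  have ball: "fst ` K \<subseteq> oball V d l (2 ^ (eta + 2) * t)"
  proof
    fix a assume "a \<in> fst ` K"
    then obtain T' where aT': "(a, T') \<in> R" "knows d r T T'" unfolding K_def by force
    obtain v u where vu: "v \<in> T" "u \<in> T'" "d v u < r" using aT'(2) unfolding knows_def by blast
    have in_V: "a \<in> V" "v \<in> V" "u \<in> V"
      using level_invD(1,2)[OF inv aT'(1)] level_invD(2)[OF inv lT] vu by auto
    have "d a l \<le> d u a + d v u + d v l"
      using metric_triangle[OF met in_V(1,3) lV] metric_triangle[OF met in_V(3,2) lV]
        metric_sym[OF met in_V(1,3)] metric_sym[OF met in_V(3,2)] by linarith
    also have "\<dots> < 2 * r"
      using level_invD(3)[OF inv aT'(1) vu(2)] level_invD(3)[OF inv lT vu(1)] vu(3) by linarith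
    also have "2 * r = 2 ^ (eta + 2) * t" unfolding t_def by (simp add: power_add)
    finally show "a \<in> oball V d l (2 ^ (eta + 2) * t)" using in_V(1) unfolding oball_def by simp
  qed
  have sep: "2 * t \<le> d a b" if "a \<in> fst ` K" "b \<in> fst ` K" "a \<noteq> b" for a b
    using that level_invD(4)[OF inv] unfolding K_def t_def by force
  have "card {T'. (\<exists>l'. (l', T') \<in> R) \<and> knows d r T T'} = card (snd ` K)"
    unfolding K_def by (rule arg_cong[where f = card]) force
  also have "\<dots> \<le> card K" using finK by (rule card_image_le)
  also have "\<dots> = card (fst ` K)" using inj_on_subset[OF inj] by (simp add: K_def card_image)
  also have "\<dots> \<le> lam ^ (eta + 2)" using doubling_packing[OF fin met dbl lV \<open>t > 0\<close> ball sep] .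
  finally show ?thesis .
qed

text \<open>The bound actually obtained is lam^(eta+2).\<close>
theorem lemma3:
  fixes V :: "'a set" and d :: "'a \<Rightarrow> 'a \<Rightarrow> real" and lam :: nat
    and eta :: nat and tau r0 :: real and S :: "nat \<Rightarrow> ('a \<times> 'a set) set" and N j :: nat
    and l :: 'a and T :: "'a set"
  assumes "finite V" and "card V \<ge> 2" and "metric_on V d" and "doubling V d lam"
    and "eta \<ge> 2"
    and "1 + 1 / (2 ^ (eta - 1) - 1) \<le> tau" and "tau \<le> 2 ^ eta"
    and "hier_run V d eta tau r0 S N"
    and "j \<le> N" and "(l, T) \<in> S j"
  shows "card {T'. (\<exists>l'. (l', T') \<in> S j) \<and> knows d (tau ^ j * r0) T T'} \<le> lam ^ (3 + eta)"
proof -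
  have inv: "level_inv V d (tau ^ j * r0 / 2) (tau ^ j * r0 / 2 ^ eta) (S j)"
    using hier_run_level_inv[OF assms(3,5,6,8,9)] .
  have "tau ^ j * r0 > 0"
    using tau_ge_one[OF assms(5,6)] assms(8) unfolding hier_run_def by simp
  then have "card {T'. (\<exists>l'. (l', T') \<in> S j) \<and> knows d (tau ^ j * r0) T T'} \<le> lam ^ (eta + 2)"
    by (rule known_parts_card[OF assms(1,3,4) _ inv assms(10)])
  also have "lam ^ (eta + 2) \<le> lam ^ (3 + eta)"
    by (cases "lam = 0") (simp_all add: power_increasing del: power_Suc)
  finally show ?thesis .
qed

end
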